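(* In the setting below, $C=S/\operatorname{Ann}_S(F)$ is a free extension with base $A=\mathsf{k}[t]/(t^n)$ and fiber $B=R/\operatorname{Ann}_R(F_B)$ (via $\iota,\pi$) if and only if for every $g_{n-1}\in\operatorname{Ann}_R(F_B)$ there exist $g_0,\dots,g_{n-2}\in R$ such that $t^{n-1}g_0+t^{n-2}g_1+\cdots+tg_{n-2}+g_{n-1}\in\operatorname{Ann}_S(F)$.
   Context: $\mathsf{k}$ a field, $n\ge2$, $R=\mathsf{k}[x_1,\dots,x_r]$ standard graded, $S=R[t]$; $Q_R=\mathsf{k}_{DP}[X_1,\dots,X_r]$, $Q_S=\mathsf{k}_{DP}[X_1,\dots,X_r,T]$ divided power rings with the contraction action ($x_i^s\circ X_i^{[k]}=X_i^{[k-s]}$ for $k\ge s$, else $0$; likewise $t$ on $T$). $F_B\in Q_R$ homogeneous of degree $j_B$, $G_0=F_B$, $G_i\in Q_R$ homogeneous of degree $j_B+i$ ($1\le i\le n-1$), $F=\sum_{i=0}^{n-1}T^{[n-1-i]}G_i$. $\iota:A\to C$ is induced by $\mathsf{k}[t]\subset S$ and $\pi:C\to B$ by $t\mapsto0$, $x_i\mapsto x_i$. $C$ is a free extension with base $A$ and fiber $B$ if $\iota$ makes $C$ a free $A$-module and $\pi$ is surjective with $\ker\pi=(\iota(A_+))C$. *)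

theory Defs
  imports "HOL-Library.Poly_Mapping" "HOL-Computational_Algebra.Polynomial"
begin

text \<open>R = k[x_v : v in 'v] is represented as finitely supported maps from monomials to k: the coefficient of the
monomial with exponent vector a.  The divided power ring Q_R uses the same type, the
coefficient at b being the coefficient of X^[b].  S = R[t] is ('k mpoly) poly, and
Q_S = Q_R[T] (divided powers in T) is also ('k mpoly) poly, the k-th coefficient being
the coefficient of T^[k].\<close>

type_synonym ('v, 'k) mpoly = "('v \<Rightarrow>\<^sub>0 nat) \<Rightarrow>\<^sub>0 'k"

definition mdeg :: "('v \<Rightarrow>\<^sub>0 nat) \<Rightarrow> nat" where
  "mdeg a = (\<Sum>v\<in>Poly_Mapping.keys a. Poly_Mapping.lookup a v)"

definition homogeneous :: "nat \<Rightarrow> ('v, 'k::zero) mpoly \<Rightarrow> bool" where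
  "homogeneous d G \<longleftrightarrow> (\<forall>b\<in>Poly_Mapping.keys G. mdeg b = d)"

definition contrR :: "('v, 'k::comm_ring_1) mpoly \<Rightarrow> ('v, 'k) mpoly \<Rightarrow> ('v, 'k) mpoly" where
  "contrR f G = (\<Sum>a\<in>Poly_Mapping.keys f. \<Sum>b\<in>Poly_Mapping.keys G.
      (if Poly_Mapping.lookup a \<le> Poly_Mapping.lookup b then Poly_Mapping.single (b - a) (Poly_Mapping.lookup f a * Poly_Mapping.lookup G b) else 0))"

definition contrS :: "('v, 'k::comm_ring_1) mpoly poly \<Rightarrow> ('v, 'k) mpoly poly \<Rightarrow> ('v, 'k) mpoly poly" where
  "contrS h F = (\<Sum>j\<le>degree h. \<Sum>k\<le>degree F.
      (if j \<le> k then monom (contrR (coeff h j) (coeff F k)) (k - j) else 0))"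

definition AnnR :: "('v, 'k::comm_ring_1) mpoly \<Rightarrow> ('v, 'k) mpoly set" where
  "AnnR G = {f. contrR f G = 0}"

definition AnnS :: "('v, 'k::comm_ring_1) mpoly poly \<Rightarrow> ('v, 'k) mpoly poly set" where
  "AnnS F = {h. contrS h F = 0}"

definition constR :: "'k::zero \<Rightarrow> ('v, 'k) mpoly" where
  "constR c = Poly_Mapping.single 0 c"

definition embT :: "'k::comm_ring_1 poly \<Rightarrow> ('v, 'k) mpoly poly" where
  "embT p = map_poly constR p"

text \<open>Free extension, stated on representatives.  C = S/Ann_S(F) (h, h' in S represent the
same element of C iff h - h' \<in> Ann_S(F)); A = k[t]/(t^n) (a in k[t] represents zero in A iff
t^n divides a); \<iota>([a]) = [embT a]; B = R/Ann_R(F_B), \<pi>([h]) = [h(x,0)] = [coeff h 0].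
 (1) C is a free A-module via \<iota>: there is a family of elements (represented by a set Bs of
     representatives in S) such that every element of C is a finite A-linear combination
     of them, and any A-linear combination equal to 0 in C has all coefficients 0 in A.
 (2) \<pi> is surjective.
 (3) ker \<pi> = \<iota>(A_+) C, where A_+ consists of the classes of a with zero constant term and
     \<iota>(A_+)C is the ideal of finite sums \<Sum> \<iota>(a_i) c_i.\<close>
definition free_extension :: "nat \<Rightarrow> ('v, 'k::field) mpoly poly \<Rightarrow> ('v, 'k) mpoly \<Rightarrow> bool" where
  "free_extension n F FB \<longleftrightarrow>
     (\<exists>Bs :: ('v, 'k) mpoly poly set.
        (\<forall>h. \<exists>a :: ('v, 'k) mpoly poly \<Rightarrow> 'k poly.
            finite {b\<in>Bs. a b \<noteq> 0} \<and>
            h - (\<Sum>b\<in>{b\<in>Bs. a b \<noteq> 0}. embT (a b) * b) \<in> AnnS F) \<and>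
        (\<forall>a :: ('v, 'k) mpoly poly \<Rightarrow> 'k poly.
            finite {b\<in>Bs. a b \<noteq> 0} \<and>
            (\<Sum>b\<in>{b\<in>Bs. a b \<noteq> 0}. embT (a b) * b) \<in> AnnS F
            \<longrightarrow> (\<forall>b\<in>Bs. [:0, 1:] ^ n dvd a b))) \<and>
     (\<forall>g. \<exists>h. coeff h 0 - g \<in> AnnR FB) \<and>
     (\<forall>h. coeff h 0 \<in> AnnR FB \<longleftrightarrow>
        (\<exists>(m::nat) (a :: nat \<Rightarrow> 'k poly) (c :: nat \<Rightarrow> ('v, 'k) mpoly poly).
            (\<forall>i<m. coeff (a i) 0 = 0) \<and>
            h - (\<Sum>i<m. embT (a i) * c i) \<in> AnnS F))"

end

theory Submission
  imports Defs
begin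

text \<open>
  Since F has T-degree n - 1 with top coefficient F_B, an element h of S annihilates F as soon as
  its first n coefficients in t vanish, and if h annihilates F then its lowest t-coefficient of
  index below n annihilates F_B.  In particular \<pi> maps Ann_S(F) into Ann_R(F_B), and the
  condition of the theorem says precisely that this map is onto, which in turn is the same as
  ker \<pi> = \<iota>(A_+) C.  Given it, the constants lifting a basis of a complement of Ann_R(F_B) in R
  form an A-basis of C: they span by successive t-adic approximation, each step using that
  \<pi> is onto, and a relation among them must vanish modulo t^n, because its lowest t-coefficient
  is a combination of the basis lying in Ann_R(F_B).
\<close>

lemma lookup_constR_mult: "Poly_Mapping.lookup (constR c * f) a = c * Poly_Mapping.lookup f a"
  unfolding constR_def mult_map_scale_conv_mult[symmetric]
  by (simp add: map.rep_eq when_def)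

lemma constR_mult_constR: "constR a * constR b = constR (a * b)"
  by (simp add: constR_def mult_single)

lemma embT_0 [simp]: "embT 0 = 0"
  by (simp add: embT_def)

lemma embT_add: "embT (p + q) = embT p + embT q"
  by (rule poly_eqI) (simp add: embT_def coeff_map_poly constR_def single_add)

lemma coeff_embT: "coeff (embT p) j = constR (coeff p j)"
  by (simp add: embT_def coeff_map_poly constR_def)

lemma embT_X: "embT [:0, 1:] = [:0, 1:]"
  by (rule poly_eqI) (simp add: coeff_embT coeff_pCons constR_def split: nat.split)

lemma embT_monom_mult: "embT (monom 1 k * p) = monom 1 k * embT p"
  by (rule poly_eqI) (simp add: coeff_embT coeff_monom_mult constR_def)

lemma embT_const_mult_const: "embT [:c:] * [:r:] = [:constR c * r:]"
  by (rule poly_eqI) (simp add: coeff_embT coeff_pCons constR_def split: nat.split)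

lemma lookup_contrR:
  "Poly_Mapping.lookup (contrR f G) m =
     (\<Sum>a\<in>Poly_Mapping.keys f. Poly_Mapping.lookup f a * Poly_Mapping.lookup G (m + a))"
proof -
  have "(\<Sum>b\<in>Poly_Mapping.keys G. Poly_Mapping.lookup
      (if Poly_Mapping.lookup a \<le> Poly_Mapping.lookup b
       then Poly_Mapping.single (b - a) (Poly_Mapping.lookup f a * Poly_Mapping.lookup G b) else 0) m)
     = Poly_Mapping.lookup f a * Poly_Mapping.lookup G (m + a)" for a
  proof -
    have shift: "(Poly_Mapping.lookup a \<le> Poly_Mapping.lookup b \<and> b - a = m) \<longleftrightarrow> b = m + a" for b
    proof
      assume h: "Poly_Mapping.lookup a \<le> Poly_Mapping.lookup b \<and> b - a = m"
      show "b = m + a"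
      proof (rule poly_mapping_eqI)
        fix v
        have "Poly_Mapping.lookup a v \<le> Poly_Mapping.lookup b v" using h by (simp add: le_fun_def)
        then show "Poly_Mapping.lookup b v = Poly_Mapping.lookup (m + a) v"
          using h by (auto simp: lookup_add lookup_minus[where f=b])
      qed
    qed (auto simp: le_fun_def lookup_add intro!: poly_mapping_eqI simp: lookup_minus)
    have "(\<Sum>b\<in>Poly_Mapping.keys G. Poly_Mapping.lookup
      (if Poly_Mapping.lookup a \<le> Poly_Mapping.lookup b
       then Poly_Mapping.single (b - a) (Poly_Mapping.lookup f a * Poly_Mapping.lookup G b) else 0) m)
      = (\<Sum>b\<in>Poly_Mapping.keys G. if b = m + a then Poly_Mapping.lookup f a * Poly_Mapping.lookup G b else 0)"
      by (rule sum.cong) (use shift in \<open>auto simp: lookup_single when_def\<close>)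
    also have "\<dots> = Poly_Mapping.lookup f a * Poly_Mapping.lookup G (m + a)"
      by (simp add: sum.delta' in_keys_iff)
    finally show ?thesis .
  qed
  then show ?thesis
    unfolding contrR_def lookup_sum by simp
qed

lemma lookup_contrR_superset:
  assumes "finite A" "Poly_Mapping.keys f \<subseteq> A"
  shows "Poly_Mapping.lookup (contrR f G) m =
     (\<Sum>a\<in>A. Poly_Mapping.lookup f a * Poly_Mapping.lookup G (m + a))"
  unfolding lookup_contrR
  by (rule sum.mono_neutral_left) (use assms in \<open>auto simp: in_keys_iff\<close>)

lemma contrR_zero [simp]: "contrR 0 G = 0"
  by (simp add: contrR_def)

lemma contrR_zero_right [simp]: "contrR f 0 = 0"
  by (simp add: contrR_def)

lemma contrR_add: "contrR (f + g) G = contrR f G + contrR g G"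
proof (rule poly_mapping_eqI)
  fix m
  let ?A = "Poly_Mapping.keys f \<union> Poly_Mapping.keys g"
  have "Poly_Mapping.keys (f + g) \<subseteq> ?A" by (rule keys_add)
  then show "Poly_Mapping.lookup (contrR (f + g) G) m = Poly_Mapping.lookup (contrR f G + contrR g G) m"
    unfolding lookup_add
    by (subst (1 2 3) lookup_contrR_superset[where A = ?A]) (auto simp: lookup_add algebra_simps sum.distrib)
qed

lemma contrR_constR_mult: "contrR (constR c * f) G = constR c * contrR f G"
proof (rule poly_mapping_eqI)
  fix m
  have "Poly_Mapping.keys (constR c * f) \<subseteq> Poly_Mapping.keys f"
    by (auto simp: in_keys_iff lookup_constR_mult)
  then show "Poly_Mapping.lookup (contrR (constR c * f) G) m = Poly_Mapping.lookup (constR c * contrR f G) m"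
    unfolding lookup_constR_mult
    by (subst (1 2) lookup_contrR_superset[where A = "Poly_Mapping.keys f"])
       (auto simp: lookup_constR_mult sum_distrib_left mult.assoc)
qed

lemma coeff_contrS:
  assumes "\<And>k. n \<le> k \<Longrightarrow> coeff F k = 0"
  shows "coeff (contrS h F) l = (\<Sum>j<n. contrR (coeff h j) (coeff F (l + j)))"
proof -
  let ?g = "\<lambda>j. contrR (coeff h j) (coeff F (l + j))"
  have inner: "(\<Sum>k\<le>degree F. coeff (if j \<le> k then monom (contrR (coeff h j) (coeff F k)) (k - j) else 0) l)
      = ?g j" for j
  proof -
    have "(\<Sum>k\<le>degree F. coeff (if j \<le> k then monom (contrR (coeff h j) (coeff F k)) (k - j) else 0) l)
       = (\<Sum>k\<le>degree F. if k = l + j then contrR (coeff h j) (coeff F k) else 0)"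
      by (rule sum.cong) (auto simp: coeff_monom)
    also have "\<dots> = ?g j"
      by (auto simp: sum.delta' coeff_eq_0)
    finally show ?thesis .
  qed
  have "coeff (contrS h F) l = (\<Sum>j\<le>degree h. ?g j)"
    unfolding contrS_def coeff_sum using inner by simp
  also have "\<dots> = (\<Sum>j\<in>{..degree h} \<union> {..<n}. ?g j)"
    by (rule sum.mono_neutral_left) (auto simp: coeff_eq_0)
  also have "\<dots> = (\<Sum>j<n. ?g j)"
    by (rule sum.mono_neutral_right) (auto simp: assms)
  finally show ?thesis .
qed

lemma coeff_sum_monom_reversed:
  assumes "m \<le> n"
  shows "coeff (\<Sum>i<m. monom (f i) (n - 1 - i)) k = (if k < n \<and> n - m \<le> k then f (n - 1 - k) else 0)"
proof -
  have "coeff (\<Sum>i<m. monom (f i) (n - 1 - i)) k = (\<Sum>i<m. if i = n - 1 - k \<and> k < n then f i else 0)"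
    unfolding coeff_sum using assms by (intro sum.cong) (auto simp: coeff_monom)
  then show ?thesis
    using assms by (auto simp: sum.delta')
qed

lemma (in vector_space) span_Int_span_disjoint:
  assumes "independent B" "S \<subseteq> B" "T \<subseteq> B" "S \<inter> T = {}"
  shows "span S \<inter> span T \<subseteq> {0}"
proof
  fix x assume "x \<in> span S \<inter> span T"
  then have "x \<in> span S" "x \<in> span T"
    by auto
  then obtain s r t r' where
    s: "finite s" "s \<subseteq> S" "x = (\<Sum>a\<in>s. r a *s a)" and
    t: "finite t" "t \<subseteq> T" "x = (\<Sum>a\<in>t. r' a *s a)"
    unfolding span_explicit mem_Collect_eq by metis
  define c where "c a = (if a \<in> s then r a else - r' a)" for a
  have disjoint: "s \<inter> t = {}"
    using s(2) t(2) assms(4) by blast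
  have "(\<Sum>a\<in>s \<union> t. c a *s a) = (\<Sum>a\<in>s. c a *s a) + (\<Sum>a\<in>t. c a *s a)"
    using s(1) t(1) disjoint by (rule sum.union_disjoint)
  also have "(\<Sum>a\<in>s. c a *s a) = x"
    unfolding s(3) c_def by (rule sum.cong) simp_all
  also have "(\<Sum>a\<in>t. c a *s a) = (\<Sum>a\<in>t. - (r' a *s a))"
    unfolding c_def using disjoint by (intro sum.cong) auto
  also have "\<dots> = - x"
    unfolding t(3) by (rule sum_negf)
  finally have "(\<Sum>a\<in>s \<union> t. c a *s a) = 0"
    by simp
  moreover have "s \<union> t \<subseteq> B"
    using s(2) t(2) assms(2,3) by blast
  ultimately have "\<forall>a\<in>s. c a = 0"
    using assms(1) s(1) t(1) unfolding independent_explicit_finite_subsets by blast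
  then have "\<forall>a\<in>s. r a = 0"
    by (simp add: c_def)
  then show "x \<in> {0}"
    using s(3) by simp
qed

lemma (in vector_space) complement_basis_exists:
  assumes "subspace U"
  obtains B where "independent B" "span B \<inter> U \<subseteq> {0}" "\<And>x. \<exists>y\<in>span B. x - y \<in> U"
proof -
  obtain B0 where B0: "B0 \<subseteq> U" "independent B0" "U \<subseteq> span B0"
    by (rule maximal_independent_subset)
  obtain B1 where B1: "B0 \<subseteq> B1" "B1 \<subseteq> UNIV" "independent B1" "UNIV \<subseteq> span B1"
    by (rule maximal_independent_subset_extend[OF subset_UNIV B0(2)])
  show ?thesis
  proof (rule that[of "B1 - B0"])
    show "independent (B1 - B0)"
      using B1(3) by (rule independent_mono) blast
  next
    have "span (B1 - B0) \<inter> span B0 \<subseteq> {0}"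
      using B1(1,3) by (intro span_Int_span_disjoint) auto
    moreover have "span (B1 - B0) \<inter> U \<subseteq> span (B1 - B0) \<inter> span B0"
      using B0(3) by (rule Int_mono[OF order.refl])
    ultimately show "span (B1 - B0) \<inter> U \<subseteq> {0}"
      by (rule order_trans[rotated])
  next
    fix x
    have "B0 \<union> (B1 - B0) = B1"
      using B1(1) by blast
    then have "x \<in> span (B0 \<union> (B1 - B0))"
      using B1(4) by auto
    then obtain y0 y where y: "y0 \<in> span B0" "y \<in> span (B1 - B0)" "x = y0 + y"
      unfolding span_Un by blast
    have "span B0 \<subseteq> U"
      using B0(1) assms by (rule span_minimal)
    then have "x - y \<in> U"
      using y by auto
    with y(2) show "\<exists>y\<in>span (B1 - B0). x - y \<in> U" ..
  qed
qed

lemma (in vector_space) combination_in_complement_eq_0: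
  assumes "independent B" "span B \<inter> U \<subseteq> {0}" "finite T" "T \<subseteq> B"
    and "(\<Sum>a\<in>T. c a *s a) \<in> U" "a \<in> T"
  shows "c a = 0"
proof -
  have "(\<Sum>a\<in>T. c a *s a) \<in> span B"
    using assms(4) by (intro span_sum span_scale span_base) blast
  then have "(\<Sum>a\<in>T. c a *s a) = 0"
    using assms(2,5) by blast
  then show ?thesis
    using assms(1,3,4,6) unfolding independent_explicit_finite_subsets by blast
qed

interpretation mpoly_vs: vector_space "\<lambda>c (f::('v, 'k::field) mpoly). constR c * f"
proof unfold_locales
  fix a b :: 'k and x y :: "('v, 'k) mpoly"
  show "constR a * (x + y) = constR a * x + constR a * y" by (rule distrib_left)
  show "constR (a + b) * x = constR a * x + constR b * x"
    by (rule poly_mapping_eqI) (simp add: lookup_constR_mult lookup_add distrib_right)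
  show "constR a * (constR b * x) = constR (a * b) * x"
    by (simp add: constR_mult_constR flip: mult.assoc)
  show "constR 1 * x = x" by (simp add: constR_def)
qed

lemma subspace_AnnR: "mpoly_vs.subspace (AnnR (FB :: ('v, 'k::field) mpoly))"
  unfolding mpoly_vs.subspace_def AnnR_def by (simp add: contrR_add contrR_constR_mult)

lemma pCons_0_cases:
  assumes "coeff p 0 = 0"
  obtains q where "p = pCons 0 q"
  using assms by (cases p) auto

lemma coeff_0_sum_embT_mult:
  assumes "\<forall>i<m. coeff (a i) 0 = 0"
  shows "coeff (\<Sum>i<m. embT (a i) * c i) 0 = 0"
  using assms by (simp add: coeff_sum coeff_mult_0 coeff_embT constR_def)

locale dual_generator =
  fixes n :: nat and F :: "('v, 'k::comm_ring_1) mpoly poly" and FB :: "('v, 'k) mpoly"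
  assumes coeff_F_eq_0: "\<And>k. n \<le> k \<Longrightarrow> coeff F k = 0"
    and n_pos: "0 < n"
    and coeff_F_top: "coeff F (n - 1) = FB"
begin

lemma mem_AnnS_iff: "h \<in> AnnS F \<longleftrightarrow> (\<forall>l. (\<Sum>j<n. contrR (coeff h j) (coeff F (l + j))) = 0)"
  unfolding AnnS_def using coeff_contrS[OF coeff_F_eq_0] by (auto simp: poly_eq_iff)

lemma AnnS_add: "h \<in> AnnS F \<Longrightarrow> h' \<in> AnnS F \<Longrightarrow> h + h' \<in> AnnS F"
  unfolding mem_AnnS_iff by (simp add: contrR_add sum.distrib)

lemma in_AnnS_if_low_coeffs_0: "(\<And>j. j < n \<Longrightarrow> coeff h j = 0) \<Longrightarrow> h \<in> AnnS F"
  unfolding mem_AnnS_iff by simp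

lemma pCons_0_in_AnnS:
  assumes "h \<in> AnnS F"
  shows "pCons 0 h \<in> AnnS F"
  unfolding mem_AnnS_iff
proof
  fix l
  obtain n' where n': "n = Suc n'" using n_pos by (cases n) auto
  have "(\<Sum>j<n. contrR (coeff (pCons 0 h) j) (coeff F (l + j)))
      = (\<Sum>j<n'. contrR (coeff h j) (coeff F (Suc l + j)))"
    unfolding n' sum.lessThan_Suc_shift by simp
  also have "\<dots> = (\<Sum>j<n. contrR (coeff h j) (coeff F (Suc l + j)))"
    using coeff_F_eq_0[of "Suc l + n'"] unfolding n' sum.lessThan_Suc by simp
  also have "\<dots> = 0"
    using assms unfolding mem_AnnS_iff by blast
  finally show "(\<Sum>j<n. contrR (coeff (pCons 0 h) j) (coeff F (l + j))) = 0" .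
qed

lemma monom_mult_in_AnnS: "h \<in> AnnS F \<Longrightarrow> monom 1 k * h \<in> AnnS F"
  by (induction k) (simp_all add: monom_Suc pCons_0_in_AnnS)

lemma coeff_in_AnnR_if_lower_coeffs_0:
  assumes "h \<in> AnnS F" "m < n" "\<And>j. j < m \<Longrightarrow> coeff h j = 0"
  shows "coeff h m \<in> AnnR FB"
proof -
  have "0 = (\<Sum>j<n. contrR (coeff h j) (coeff F (n - 1 - m + j)))"
    using assms(1) unfolding mem_AnnS_iff by (metis (no_types))
  also have "\<dots> = (\<Sum>j\<in>{m}. contrR (coeff h j) (coeff F (n - 1 - m + j)))"
  proof (rule sum.mono_neutral_right)
    show "\<forall>j\<in>{..<n} - {m}. contrR (coeff h j) (coeff F (n - 1 - m + j)) = 0"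
    proof
      fix j assume j: "j \<in> {..<n} - {m}"
      show "contrR (coeff h j) (coeff F (n - 1 - m + j)) = 0"
      proof (cases "j < m")
        case True then show ?thesis using assms(3) by simp
      next
        case False then have "n \<le> n - 1 - m + j" using j assms(2) by auto
        then show ?thesis by (simp add: coeff_F_eq_0)
      qed
    qed
  qed (use assms in auto)
  also have "\<dots> = contrR (coeff h m) FB"
    using assms(2) coeff_F_top by (simp del: One_nat_def)
  finally show ?thesis by (simp add: AnnR_def)
qed

lemma coeff_0_in_AnnR: "h \<in> AnnS F \<Longrightarrow> coeff h 0 \<in> AnnR FB"
  using coeff_in_AnnR_if_lower_coeffs_0[of h 0] n_pos by simp

lemma lifting_condition_iff:
  "(\<forall>g\<in>AnnR FB. \<exists>gs. (\<Sum>i<n - 1. monom (gs i) (n - 1 - i)) + [:g:] \<in> AnnS F)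
   \<longleftrightarrow> AnnR FB \<subseteq> (\<lambda>h. coeff h 0) ` AnnS F"
proof -
  have coeff_lift: "coeff ((\<Sum>i<n - 1. monom (gs i) (n - 1 - i)) + [:g:]) k =
      (if k = 0 then g else if k < n then gs (n - 1 - k) else 0)" for gs g k
  proof -
    have "coeff (\<Sum>i<n - 1. monom (gs i) (n - 1 - i)) k =
        (if k < n \<and> n - (n - 1) \<le> k then gs (n - 1 - k) else 0)"
      by (rule coeff_sum_monom_reversed) simp
    then show ?thesis
      using n_pos by (auto simp: coeff_pCons split: nat.split)
  qed
  show ?thesis
  proof
    assume lifts: "\<forall>g\<in>AnnR FB. \<exists>gs. (\<Sum>i<n - 1. monom (gs i) (n - 1 - i)) + [:g:] \<in> AnnS F"
    show "AnnR FB \<subseteq> (\<lambda>h. coeff h 0) ` AnnS F"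
    proof
      fix g assume "g \<in> AnnR FB"
      then obtain gs where "(\<Sum>i<n - 1. monom (gs i) (n - 1 - i)) + [:g:] \<in> AnnS F"
        using lifts by blast
      then show "g \<in> (\<lambda>h. coeff h 0) ` AnnS F"
        by (rule rev_image_eqI) (subst coeff_lift, simp)
    qed
  next
    assume surj: "AnnR FB \<subseteq> (\<lambda>h. coeff h 0) ` AnnS F"
    show "\<forall>g\<in>AnnR FB. \<exists>gs. (\<Sum>i<n - 1. monom (gs i) (n - 1 - i)) + [:g:] \<in> AnnS F"
    proof
      fix g assume "g \<in> AnnR FB"
      then obtain h where h: "h \<in> AnnS F" "coeff h 0 = g"
        using surj by blast
      define lift where "lift = (\<Sum>i<n - 1. monom (coeff h (n - 1 - i)) (n - 1 - i)) + [:g:]"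
      have "lift - h \<in> AnnS F"
        by (rule in_AnnS_if_low_coeffs_0) (unfold lift_def coeff_diff coeff_lift, simp add: h(2))
      then have "h + (lift - h) \<in> AnnS F"
        using h(1) by (rule AnnS_add[rotated])
      then show "\<exists>gs. (\<Sum>i<n - 1. monom (gs i) (n - 1 - i)) + [:g:] \<in> AnnS F"
        unfolding lift_def by auto
    qed
  qed
qed

lemma kernel_condition_iff:
  "(\<forall>h. coeff h 0 \<in> AnnR FB \<longleftrightarrow>
      (\<exists>(m::nat) (a :: nat \<Rightarrow> 'k poly) (c :: nat \<Rightarrow> ('v, 'k) mpoly poly).
         (\<forall>i<m. coeff (a i) 0 = 0) \<and> h - (\<Sum>i<m. embT (a i) * c i) \<in> AnnS F))
   \<longleftrightarrow> AnnR FB \<subseteq> (\<lambda>h. coeff h 0) ` AnnS F"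
proof
  assume kernel: "\<forall>h. coeff h 0 \<in> AnnR FB \<longleftrightarrow> (\<exists>(m::nat) (a :: nat \<Rightarrow> 'k poly) c.
      (\<forall>i<m. coeff (a i) 0 = 0) \<and> h - (\<Sum>i<m. embT (a i) * c i) \<in> AnnS F)"
  show "AnnR FB \<subseteq> (\<lambda>h. coeff h 0) ` AnnS F"
  proof
    fix g assume "g \<in> AnnR FB"
    then obtain m and a :: "nat \<Rightarrow> 'k poly" and c where
      a: "\<forall>i<m. coeff (a i) 0 = 0" and in_AnnS: "[:g:] - (\<Sum>i<m. embT (a i) * c i) \<in> AnnS F"
      using kernel[rule_format, of "[:g:]"] by auto
    have "coeff ([:g:] - (\<Sum>i<m. embT (a i) * c i)) 0 = g"
      using coeff_0_sum_embT_mult[OF a] by simp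
    with in_AnnS show "g \<in> (\<lambda>h. coeff h 0) ` AnnS F"
      by force
  qed
next
  assume surj: "AnnR FB \<subseteq> (\<lambda>h. coeff h 0) ` AnnS F"
  show "\<forall>h. coeff h 0 \<in> AnnR FB \<longleftrightarrow> (\<exists>(m::nat) (a :: nat \<Rightarrow> 'k poly) c.
      (\<forall>i<m. coeff (a i) 0 = 0) \<and> h - (\<Sum>i<m. embT (a i) * c i) \<in> AnnS F)"
  proof (intro allI iffI)
    fix h assume "coeff h 0 \<in> AnnR FB"
    then obtain h' where h': "h' \<in> AnnS F" "coeff h' 0 = coeff h 0"
      using surj by force
    obtain q where q: "h - h' = pCons 0 q"
      by (rule pCons_0_cases[of "h - h'"]) (simp add: h'(2))
    have "h - (\<Sum>i<(1::nat). embT [:0, 1:] * q) = h'"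
      by (simp add: embT_X flip: q)
    with h'(1) show "\<exists>(m::nat) (a :: nat \<Rightarrow> 'k poly) c.
        (\<forall>i<m. coeff (a i) 0 = 0) \<and> h - (\<Sum>i<m. embT (a i) * c i) \<in> AnnS F"
      by (intro exI[of _ 1] exI[of _ "\<lambda>_. [:0, 1:]"] exI[of _ "\<lambda>_. q"]) simp
  next
    fix h assume "\<exists>(m::nat) (a :: nat \<Rightarrow> 'k poly) c.
        (\<forall>i<m. coeff (a i) 0 = 0) \<and> h - (\<Sum>i<m. embT (a i) * c i) \<in> AnnS F"
    then obtain m and a :: "nat \<Rightarrow> 'k poly" and c where
      a: "\<forall>i<m. coeff (a i) 0 = 0" and in_AnnS: "h - (\<Sum>i<m. embT (a i) * c i) \<in> AnnS F"
      by blast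
    show "coeff h 0 \<in> AnnR FB"
      using coeff_0_in_AnnR[OF in_AnnS] coeff_0_sum_embT_mult[OF a, of c] by simp
  qed
qed

end

definition lifted_span :: "('v, 'k::comm_ring_1) mpoly set \<Rightarrow> ('v, 'k) mpoly poly set" where
  "lifted_span Bas = {(\<Sum>r\<in>T. embT (a r) * [:r:]) | T a. finite T \<and> T \<subseteq> Bas}"

lemma lifted_spanI:
  "finite T \<Longrightarrow> T \<subseteq> Bas \<Longrightarrow> (\<Sum>r\<in>T. embT (a r) * [:r:]) \<in> lifted_span Bas"
  unfolding lifted_span_def by blast

lemma zero_in_lifted_span: "0 \<in> lifted_span Bas"
  using lifted_spanI[of "{}"] by simp

lemma lifted_span_add:
  assumes "x \<in> lifted_span Bas" "y \<in> lifted_span Bas"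
  shows "x + y \<in> lifted_span Bas"
proof -
  obtain T a T' a' where T: "finite T" "T \<subseteq> Bas" "x = (\<Sum>r\<in>T. embT (a r) * [:r:])"
    and T': "finite T'" "T' \<subseteq> Bas" "y = (\<Sum>r\<in>T'. embT (a' r) * [:r:])"
    using assms unfolding lifted_span_def by blast
  define b where "b r = (if r \<in> T then a r else 0) + (if r \<in> T' then a' r else 0)" for r
  have "(\<Sum>r\<in>T \<union> T'. embT (b r) * [:r:])
      = (\<Sum>r\<in>T \<union> T'. if r \<in> T then embT (a r) * [:r:] else 0)
        + (\<Sum>r\<in>T \<union> T'. if r \<in> T' then embT (a' r) * [:r:] else 0)"
    unfolding b_def embT_add distrib_right sum.distrib[symmetric] by (intro sum.cong) auto
  also have "\<dots> = x + y"
    unfolding T(3) T'(3) using T(1) T'(1)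
    by (simp add: Int_absorb1 Int_absorb2 flip: sum.inter_restrict del: mult_pCons_right)
  finally show ?thesis
    using lifted_spanI[of "T \<union> T'" Bas b] T T' by simp
qed

lemma monom_mult_in_lifted_span:
  assumes "x \<in> lifted_span Bas"
  shows "monom 1 k * x \<in> lifted_span Bas"
proof -
  obtain T a where T: "finite T" "T \<subseteq> Bas" "x = (\<Sum>r\<in>T. embT (a r) * [:r:])"
    using assms unfolding lifted_span_def by blast
  have "monom 1 k * x = (\<Sum>r\<in>T. embT (monom 1 k * a r) * [:r:])"
    unfolding T(3) by (simp add: sum_distrib_left embT_monom_mult mult.assoc)
  then show ?thesis
    using lifted_spanI[OF T(1,2)] by simp
qed

lemma const_in_lifted_span:
  assumes "w \<in> mpoly_vs.span Bas"
  shows "[:w:] \<in> lifted_span Bas"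
proof -
  obtain T u where T: "finite T" "T \<subseteq> Bas" "w = (\<Sum>r\<in>T. constR (u r) * r)"
    using assms unfolding mpoly_vs.span_explicit by blast
  have "[:w:] = (\<Sum>r\<in>T. [:constR (u r) * r:])"
    unfolding T(3) by (simp add: monom_sum flip: monom_0)
  then show ?thesis
    using lifted_spanI[OF T(1,2), of "\<lambda>r. [:u r:]"] by (simp add: embT_const_mult_const del: mult_pCons_right)
qed

lemma sum_over_support_eq_lifted:
  fixes a :: "('v, 'k::comm_ring_1) mpoly poly \<Rightarrow> 'k poly"
  assumes "finite {b \<in> (\<lambda>r. [:r:]) ` Bas. a b \<noteq> 0}"
  shows "finite {r \<in> Bas. a [:r:] \<noteq> 0}"
    and "(\<Sum>b\<in>{b \<in> (\<lambda>r. [:r:]) ` Bas. a b \<noteq> 0}. embT (a b) * b)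
         = (\<Sum>r\<in>{r \<in> Bas. a [:r:] \<noteq> 0}. embT (a [:r:]) * [:r:])"
proof -
  have support: "{b \<in> (\<lambda>r. [:r:]) ` Bas. a b \<noteq> 0} = (\<lambda>r. [:r:]) ` {r \<in> Bas. a [:r:] \<noteq> 0}"
    by auto
  have inj: "inj_on (\<lambda>r. [:r:]) {r \<in> Bas. a [:r:] \<noteq> 0}"
    by (auto simp: inj_on_def)
  show "finite {r \<in> Bas. a [:r:] \<noteq> 0}"
    using assms unfolding support by (rule finite_imageD[OF _ inj])
  show "(\<Sum>b\<in>{b \<in> (\<lambda>r. [:r:]) ` Bas. a b \<noteq> 0}. embT (a b) * b)
      = (\<Sum>r\<in>{r \<in> Bas. a [:r:] \<noteq> 0}. embT (a [:r:]) * [:r:])"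
    unfolding support by (simp add: sum.reindex[OF inj])
qed

lemma lifted_span_support_form:
  assumes "v \<in> lifted_span Bas"
  obtains a where "finite {b \<in> (\<lambda>r. [:r:]) ` Bas. a b \<noteq> 0}"
    and "v = (\<Sum>b\<in>{b \<in> (\<lambda>r. [:r:]) ` Bas. a b \<noteq> 0}. embT (a b) * b)"
proof -
  obtain T c where T: "finite T" "T \<subseteq> Bas" "v = (\<Sum>r\<in>T. embT (c r) * [:r:])"
    using assms unfolding lifted_span_def by blast
  define a where "a b = (if b \<in> (\<lambda>r. [:r:]) ` T then c (coeff b 0) else 0)" for b
  have a_const: "a [:r:] = (if r \<in> T then c r else 0)" for r
    by (auto simp: a_def)
  have finite: "finite {b \<in> (\<lambda>r. [:r:]) ` Bas. a b \<noteq> 0}"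
    by (rule finite_subset[of _ "(\<lambda>r. [:r:]) ` T"]) (use T(1) in \<open>auto simp: a_def\<close>)
  have "(\<Sum>b\<in>{b \<in> (\<lambda>r. [:r:]) ` Bas. a b \<noteq> 0}. embT (a b) * b)
      = (\<Sum>r\<in>{r \<in> Bas. a [:r:] \<noteq> 0}. embT (a [:r:]) * [:r:])"
    using finite by (rule sum_over_support_eq_lifted)
  also have "\<dots> = (\<Sum>r\<in>T. embT (c r) * [:r:])"
    using T(1,2) by (intro sum.mono_neutral_cong_left) (auto simp: a_const embT_def)
  finally show ?thesis
    using that finite T(3) by simp
qed

locale dual_generator_field = dual_generator n F FB
  for n and F :: "('v, 'k::field) mpoly poly" and FB
begin

lemma split_off_constant_term:
  assumes surj: "AnnR FB \<subseteq> (\<lambda>h. coeff h 0) ` AnnS F"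
    and spans: "\<And>g. \<exists>w\<in>mpoly_vs.span Bas. g - w \<in> AnnR FB"
  shows "\<exists>w\<in>mpoly_vs.span Bas. \<exists>q. h - [:w:] - pCons 0 q \<in> AnnS F"
proof -
  obtain w where w: "w \<in> mpoly_vs.span Bas" "coeff h 0 - w \<in> AnnR FB"
    using spans by blast
  then obtain h' where h': "h' \<in> AnnS F" "coeff h' 0 = coeff h 0 - w"
    using surj by force
  obtain q where "h - [:w:] - h' = pCons 0 q"
    by (rule pCons_0_cases[of "h - [:w:] - h'"]) (simp add: h'(2))
  then have "h - [:w:] - pCons 0 q = h'"
    by (simp add: algebra_simps)
  with w(1) h'(1) show ?thesis by auto
qed

lemma congruent_to_lifted_span:
  assumes surj: "AnnR FB \<subseteq> (\<lambda>h. coeff h 0) ` AnnS F"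
    and spans: "\<And>g. \<exists>w\<in>mpoly_vs.span Bas. g - w \<in> AnnR FB"
  shows "\<exists>v\<in>lifted_span Bas. h - v \<in> AnnS F"
proof -
  have "\<exists>v\<in>lifted_span Bas. \<exists>h'. h - v - monom 1 k * h' \<in> AnnS F" for k
  proof (induction k)
    case 0
    have "h - 0 - monom 1 0 * h \<in> AnnS F"
      by (rule in_AnnS_if_low_coeffs_0) (simp add: monom_0)
    then show ?case
      using zero_in_lifted_span by blast
  next
    case (Suc k)
    then obtain v h' where v: "v \<in> lifted_span Bas" "h - v - monom 1 k * h' \<in> AnnS F"
      by blast
    obtain w q where w: "w \<in> mpoly_vs.span Bas" "h' - [:w:] - pCons 0 q \<in> AnnS F"
      using split_off_constant_term[OF surj spans] by blast
    have "v + monom 1 k * [:w:] \<in> lifted_span Bas"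
      using v(1) const_in_lifted_span[OF w(1)] by (intro lifted_span_add monom_mult_in_lifted_span)
    moreover have "h - (v + monom 1 k * [:w:]) - monom 1 (Suc k) * q
        = (h - v - monom 1 k * h') + monom 1 k * (h' - [:w:] - pCons 0 q)"
      by (simp add: monom_Suc algebra_simps)
    moreover have "\<dots> \<in> AnnS F"
      using v(2) w(2) by (intro AnnS_add monom_mult_in_AnnS)
    ultimately show ?case
      by metis
  qed
  then obtain v h' where "v \<in> lifted_span Bas" "h - v - monom 1 n * h' \<in> AnnS F"
    by blast
  moreover have "monom 1 n * h' \<in> AnnS F"
    by (rule in_AnnS_if_low_coeffs_0) (simp add: coeff_monom_mult)
  ultimately show ?thesis
    by (metis AnnS_add diff_add_cancel)
qed

lemma lifted_combination_in_AnnS_dvd: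
  assumes indep: "mpoly_vs.independent Bas" and complement: "mpoly_vs.span Bas \<inter> AnnR FB \<subseteq> {0}"
    and T: "finite T" "T \<subseteq> Bas" and in_AnnS: "(\<Sum>r\<in>T. embT (a r) * [:r:]) \<in> AnnS F"
    and "r \<in> T"
  shows "monom 1 n dvd a r"
proof -
  have coeff_comb: "coeff (\<Sum>r\<in>T. embT (a r) * [:r:]) j = (\<Sum>r\<in>T. constR (coeff (a r) j) * r)" for j
    by (simp add: coeff_sum coeff_embT mult.commute)
  have "\<forall>r\<in>T. coeff (a r) j = 0" if "j < n" for j
    using that
  proof (induction j rule: less_induct)
    case (less j)
    then have "coeff (\<Sum>r\<in>T. embT (a r) * [:r:]) i = 0" if "i < j" for i
      using that unfolding coeff_comb by simp
    then have "(\<Sum>r\<in>T. constR (coeff (a r) j) * r) \<in> AnnR FB"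
      using coeff_in_AnnR_if_lower_coeffs_0[OF in_AnnS less.prems] unfolding coeff_comb by blast
    then show ?case
      using mpoly_vs.combination_in_complement_eq_0[OF indep complement T, where c = "\<lambda>r. coeff (a r) j"]
      by blast
  qed
  then show ?thesis
    using \<open>r \<in> T\<close> by (simp add: monom_1_dvd_iff')
qed

lemma free_basis_exists:
  assumes surj: "AnnR FB \<subseteq> (\<lambda>h. coeff h 0) ` AnnS F"
  shows "\<exists>Bs :: ('v, 'k) mpoly poly set.
    (\<forall>h. \<exists>a :: ('v, 'k) mpoly poly \<Rightarrow> 'k poly.
        finite {b\<in>Bs. a b \<noteq> 0} \<and> h - (\<Sum>b\<in>{b\<in>Bs. a b \<noteq> 0}. embT (a b) * b) \<in> AnnS F) \<and>
    (\<forall>a :: ('v, 'k) mpoly poly \<Rightarrow> 'k poly.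
        finite {b\<in>Bs. a b \<noteq> 0} \<and> (\<Sum>b\<in>{b\<in>Bs. a b \<noteq> 0}. embT (a b) * b) \<in> AnnS F
        \<longrightarrow> (\<forall>b\<in>Bs. [:0, 1:] ^ n dvd a b))"
proof -
  obtain Bas where indep: "mpoly_vs.independent Bas"
    and complement: "mpoly_vs.span Bas \<inter> AnnR FB \<subseteq> {0}"
    and spans: "\<And>g. \<exists>w\<in>mpoly_vs.span Bas. g - w \<in> AnnR FB"
    using mpoly_vs.complement_basis_exists[OF subspace_AnnR[of FB]] by metis
  show ?thesis
  proof (intro exI[of _ "(\<lambda>r. [:r:]) ` Bas"] conjI allI impI ballI)
    fix h
    obtain v where v: "v \<in> lifted_span Bas" "h - v \<in> AnnS F"
      using congruent_to_lifted_span[OF surj spans] by blast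
    obtain a where a: "finite {b \<in> (\<lambda>r. [:r:]) ` Bas. a b \<noteq> 0}"
      "v = (\<Sum>b\<in>{b \<in> (\<lambda>r. [:r:]) ` Bas. a b \<noteq> 0}. embT (a b) * b)"
      by (rule lifted_span_support_form[OF v(1)])
    show "\<exists>a. finite {b \<in> (\<lambda>r. [:r:]) ` Bas. a b \<noteq> 0} \<and>
        h - (\<Sum>b\<in>{b \<in> (\<lambda>r. [:r:]) ` Bas. a b \<noteq> 0}. embT (a b) * b) \<in> AnnS F"
      using a v(2) by (intro exI[of _ a]) simp
  next
    fix a b
    assume comb: "finite {b \<in> (\<lambda>r. [:r:]) ` Bas. a b \<noteq> 0} \<and>
        (\<Sum>b\<in>{b \<in> (\<lambda>r. [:r:]) ` Bas. a b \<noteq> 0}. embT (a b) * b) \<in> AnnS F"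
      and "b \<in> (\<lambda>r. [:r:]) ` Bas"
    then obtain r where r: "r \<in> Bas" "b = [:r:]"
      by blast
    have support: "finite {r \<in> Bas. a [:r:] \<noteq> 0}"
      and in_AnnS: "(\<Sum>r\<in>{r \<in> Bas. a [:r:] \<noteq> 0}. embT (a [:r:]) * [:r:]) \<in> AnnS F"
      using comb sum_over_support_eq_lifted[of Bas a] by simp_all
    have "monom 1 n dvd a [:r:]" if "a [:r:] \<noteq> 0"
      using lifted_combination_in_AnnS_dvd[OF indep complement support _ in_AnnS] r(1) that by simp
    then show "[:0, 1:] ^ n dvd a b"
      using r(2) by (cases "a [:r:] = 0") (simp_all add: monom_altdef)
  qed
qed

theorem free_extension_iff: "free_extension n F FB \<longleftrightarrow> AnnR FB \<subseteq> (\<lambda>h. coeff h 0) ` AnnS F"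
proof
  assume "free_extension n F FB"
  then show "AnnR FB \<subseteq> (\<lambda>h. coeff h 0) ` AnnS F"
    unfolding free_extension_def kernel_condition_iff[symmetric] by blast
next
  assume surj: "AnnR FB \<subseteq> (\<lambda>h. coeff h 0) ` AnnS F"
  have "\<exists>h. coeff h 0 - g \<in> AnnR FB" for g
    by (intro exI[of _ "[:g:]"]) (simp add: AnnR_def)
  with surj show "free_extension n F FB"
    unfolding free_extension_def kernel_condition_iff using free_basis_exists by blast
qed

end

theorem lemma2p3:
  fixes n jB :: nat
    and FB :: "('v::finite, 'k::field) mpoly"
    and G :: "nat \<Rightarrow> ('v, 'k) mpoly"
    and F :: "('v, 'k) mpoly poly"
  assumes "n \<ge> 2"
    and "homogeneous jB FB"
    and "G 0 = FB"
    and "\<And>i. 1 \<le> i \<Longrightarrow> i \<le> n - 1 \<Longrightarrow> homogeneous (jB + i) (G i)"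
    and "F = (\<Sum>i<n. monom (G i) (n - 1 - i))"
  shows "free_extension n F FB \<longleftrightarrow>
    (\<forall>g\<in>AnnR FB. \<exists>gs :: nat \<Rightarrow> ('v, 'k) mpoly.
        (\<Sum>i<n - 1. monom (gs i) (n - 1 - i)) + [:g:] \<in> AnnS F)"
proof -
  have coeff_F: "coeff F k = (if k < n then G (n - 1 - k) else 0)" for k
    using coeff_sum_monom_reversed[of n n G k] assms(5) by simp
  interpret dual_generator_field n F FB
    by unfold_locales (use coeff_F assms(1,3) in auto)
  show ?thesis
    unfolding free_extension_iff lifting_condition_iff ..
qed

end
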